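(* Let $U$ be a finite universe, let $\mathbf{B} = (\mathbf{B}_1, \mathbf{B}_2)$ be any Bloom filter, and fix $p \in (\tfrac12, 1)$. The Warner filter built from $\mathbf{B}$ — whose construction algorithm $\mathbf{B}_1'$, on input $S \subseteq U$, initializes $S' \gets \emptyset$, adds each $x \in S$ to $S'$ independently with probability $p$, adds each $x \in U \setminus S$ to $S'$ independently with probability $1-p$, and returns $\mathbf{B}_1(S')$ (the query algorithm $\mathbf{B}_2$ being unchanged) — satisfies $\left(\ln\frac{p}{1-p},\ 0\right)$-differential privacy, i.e. the randomized algorithm $\mathbf{B}_1'$ mapping sets to representations satisfies this differential privacy guarantee.
   Context: A Bloom filter is a pair $\mathbf{B}=(\mathbf{B}_1,\mathbf{B}_2)$ of probabilistic polynomial-time algorithms: $\mathbf{B}_1$ takes a set $S \subseteq U$ and returns a representation $M$; $\mathbf{B}_2$ takes a representation $M$ and an element $x \in U$ and outputs a bit. For sets $A,B$, let $d_{sj}(A,B) = |A \cup B| - |A \cap B|$. A randomized algorithm $\mathbf{A}_r$ taking subsets of $U$ as input satisfies $(\epsilon,\delta)$-differential privacy if for any two sets $S,S'$ with $d_{sj}(S,S') \le 1$ and any output range $O \subseteq \mathrm{Range}(\mathbf{A}_r)$, $\Pr[\mathbf{A}_r(S) \in O] \le e^{\epsilon}\Pr[\mathbf{A}_r(S') \in O] + \delta$, probabilities over the randomness of $\mathbf{A}_r$. *)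

theory Defs
  imports "HOL-Probability.Probability"
begin

definition d_sj :: "'a set \<Rightarrow> 'a set \<Rightarrow> int" where
  "d_sj A B = int (card (A \<union> B)) - int (card (A \<inter> B))"

text \<open>Every set of outputs is an event of a pmf.\<close>
definition differentially_private ::
  "'a set \<Rightarrow> ('a set \<Rightarrow> 'm pmf) \<Rightarrow> real \<Rightarrow> real \<Rightarrow> bool" where
  "differentially_private U A eps delta \<longleftrightarrow>
     (\<forall>S S' Out. S \<subseteq> U \<longrightarrow> S' \<subseteq> U \<longrightarrow> d_sj S S' \<le> 1 \<longrightarrow>
        measure_pmf.prob (A S) Out \<le> exp eps * measure_pmf.prob (A S') Out + delta)"

definition warner_set :: "'a set \<Rightarrow> real \<Rightarrow> 'a set \<Rightarrow> 'a set pmf" where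
  "warner_set U p S =
     map_pmf (\<lambda>f. {x \<in> U. f x})
       (Pi_pmf U False (\<lambda>x. bernoulli_pmf (if x \<in> S then p else 1 - p)))"

definition warner_B1 :: "'a set \<Rightarrow> real \<Rightarrow> ('a set \<Rightarrow> 'm pmf) \<Rightarrow> 'a set \<Rightarrow> 'm pmf" where
  "warner_B1 U p B1 S = bind_pmf (warner_set U p S) B1"

end

theory Submission
  imports Defs
begin

text \<open>The random set of the Warner filter is a product of independent biased bits. For
  neighbouring inputs the biases differ in at most one coordinate, where the likelihood ratio
  of the two bits is p/(1-p) or (1-p)/p, both at most p/(1-p) since p \<ge> 1/2. So the pmf of
  the random set on input S is pointwise at most p/(1-p) times the one on input S', and
  such a pointwise bound on pmfs survives post-processing by B1 and summation over any set
  of outputs.\<close>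

lemma nn_integral_pmf_le_scaled:
  fixes c :: real
  assumes dom: "\<And>x. pmf X x \<le> c * pmf Y x" and "0 \<le> c"
  shows "(\<integral>\<^sup>+x. g x \<partial>X) \<le> ennreal c * (\<integral>\<^sup>+x. g x \<partial>Y)"
proof -
  have "(\<integral>\<^sup>+x. g x \<partial>X) = (\<integral>\<^sup>+x. ennreal (pmf X x) * g x \<partial>count_space UNIV)"
    by (rule nn_integral_measure_pmf)
  also have "\<dots> \<le> (\<integral>\<^sup>+x. ennreal c * (ennreal (pmf Y x) * g x) \<partial>count_space UNIV)"
  proof (rule nn_integral_mono)
    fix x
    have "ennreal (pmf X x) \<le> ennreal c * ennreal (pmf Y x)"
      using dom \<open>0 \<le> c\<close> by (simp add: ennreal_mult[symmetric])
    then show "ennreal (pmf X x) * g x \<le> ennreal c * (ennreal (pmf Y x) * g x)"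
      by (metis mult.assoc mult_right_mono zero_le)
  qed
  also have "\<dots> = ennreal c * (\<integral>\<^sup>+x. g x \<partial>Y)"
    by (simp add: nn_integral_cmult nn_integral_measure_pmf)
  finally show ?thesis .
qed

lemma measure_pmf_le_scaled:
  fixes c :: real
  assumes "\<And>x. pmf X x \<le> c * pmf Y x" and "0 \<le> c"
  shows "measure_pmf.prob X A \<le> c * measure_pmf.prob Y A"
proof -
  have "emeasure X A \<le> ennreal c * emeasure Y A"
    using nn_integral_pmf_le_scaled[OF assms, of "indicator A"] by simp
  then show ?thesis
    using \<open>0 \<le> c\<close> by (simp add: measure_pmf.emeasure_eq_measure ennreal_mult[symmetric] ennreal_le_iff)
qed

lemma measure_bind_pmf_le_scaled:
  fixes c :: real
  assumes "\<And>x. pmf X x \<le> c * pmf Y x" and "0 \<le> c"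
  shows "measure_pmf.prob (bind_pmf X f) A \<le> c * measure_pmf.prob (bind_pmf Y f) A"
proof -
  have "emeasure (bind_pmf X f) A \<le> ennreal c * emeasure (bind_pmf Y f) A"
    using nn_integral_pmf_le_scaled[OF assms, of "\<lambda>x. emeasure (f x) A"] by simp
  then show ?thesis
    using \<open>0 \<le> c\<close> by (simp add: measure_pmf.emeasure_eq_measure ennreal_mult[symmetric] ennreal_le_iff)
qed

lemma pmf_map_pmf_le_scaled:
  fixes c :: real
  assumes "\<And>x. pmf X x \<le> c * pmf Y x" and "0 \<le> c"
  shows "pmf (map_pmf g X) y \<le> c * pmf (map_pmf g Y) y"
  unfolding pmf_map by (rule measure_pmf_le_scaled[OF assms])

lemma pmf_Pi_pmf_le_prod:
  fixes c :: "'a \<Rightarrow> real"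
  assumes "finite A" and dom: "\<And>x b. x \<in> A \<Longrightarrow> pmf (P x) b \<le> c x * pmf (Q x) b"
  shows "pmf (Pi_pmf A d P) f \<le> (\<Prod>x\<in>A. c x) * pmf (Pi_pmf A d Q) f"
proof (cases "\<forall>x. x \<notin> A \<longrightarrow> f x = d")
  case True
  have "(\<Prod>x\<in>A. pmf (P x) (f x)) \<le> (\<Prod>x\<in>A. c x * pmf (Q x) (f x))"
    by (rule prod_mono) (simp add: dom)
  then show ?thesis
    using True \<open>finite A\<close> by (simp add: pmf_Pi' prod.distrib)
next
  case False
  then show ?thesis
    using \<open>finite A\<close> by (simp add: pmf_Pi_outside)
qed

lemma pmf_bernoulli_warner_le:
  fixes p :: real
  assumes "1/2 \<le> p" and "p < 1"
  shows "pmf (bernoulli_pmf (if P then p else 1 - p)) b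
           \<le> (if P = Q then 1 else p / (1 - p)) * pmf (bernoulli_pmf (if Q then p else 1 - p)) b"
  using assms by (cases P; cases Q; cases b) (simp_all add: field_simps)

lemma pmf_warner_set_le:
  fixes p :: real
  assumes "finite U" and "1/2 \<le> p" and "p < 1"
  shows "pmf (warner_set U p S) T
           \<le> (p / (1 - p)) ^ card (U \<inter> sym_diff S S') * pmf (warner_set U p S') T"
proof -
  let ?c = "\<lambda>x. if (x \<in> S) = (x \<in> S') then 1 else p / (1 - p)"
  let ?bit = "\<lambda>S x. bernoulli_pmf (if x \<in> S then p else 1 - p)"
  have "U \<inter> - {x. (x \<in> S) = (x \<in> S')} = U \<inter> sym_diff S S'"
    by blast
  with \<open>finite U\<close> have "(\<Prod>x\<in>U. ?c x) = (p / (1 - p)) ^ card (U \<inter> sym_diff S S')"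
    by (simp add: prod.If_cases)
  moreover have "pmf (Pi_pmf U False (?bit S)) f \<le> (\<Prod>x\<in>U. ?c x) * pmf (Pi_pmf U False (?bit S')) f" for f
    by (rule pmf_Pi_pmf_le_prod[OF \<open>finite U\<close>]) (rule pmf_bernoulli_warner_le[OF assms(2,3)])
  moreover have "0 \<le> p / (1 - p)"
    using assms by simp
  ultimately show ?thesis
    unfolding warner_set_def by (intro pmf_map_pmf_le_scaled) simp_all
qed

lemma warner_B1_group_privacy:
  fixes p :: real
  assumes "finite U" and "1/2 \<le> p" and "p < 1"
  shows "measure_pmf.prob (warner_B1 U p B1 S) Out
           \<le> (p / (1 - p)) ^ card (U \<inter> sym_diff S S') * measure_pmf.prob (warner_B1 U p B1 S') Out"
  unfolding warner_B1_def
  by (rule measure_bind_pmf_le_scaled[OF pmf_warner_set_le[OF assms]]) (use assms in simp)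

lemma d_sj_eq_card_sym_diff:
  assumes "finite A" and "finite B"
  shows "d_sj A B = int (card (sym_diff A B))"
proof -
  have "card (sym_diff A B) = card ((A \<union> B) - (A \<inter> B))"
    by (rule arg_cong[where f = card]) blast
  also have "\<dots> = card (A \<union> B) - card (A \<inter> B)"
    using assms by (intro card_Diff_subset) auto
  finally have "card (sym_diff A B) = card (A \<union> B) - card (A \<inter> B)" .
  moreover have "card (A \<inter> B) \<le> card (A \<union> B)"
    using assms by (intro card_mono) auto
  ultimately show ?thesis
    unfolding d_sj_def by simp
qed

theorem mainTheorem3:
  fixes U :: "'a set" and B1 :: "'a set \<Rightarrow> 'm pmf"
    and p :: real
  assumes "finite U"
    and "1/2 < p" and "p < 1"
  shows "differentially_private U (warner_B1 U p B1) (ln (p / (1 - p))) 0"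
  unfolding differentially_private_def
proof (intro allI impI)
  fix S S' :: "'a set" and Out :: "'m set"
  assume "S \<subseteq> U" and "S' \<subseteq> U" and "d_sj S S' \<le> 1"
  moreover have "finite S" and "finite S'"
    using \<open>S \<subseteq> U\<close> \<open>S' \<subseteq> U\<close> \<open>finite U\<close> finite_subset by blast+
  moreover have "U \<inter> sym_diff S S' = sym_diff S S'"
    using \<open>S \<subseteq> U\<close> \<open>S' \<subseteq> U\<close> by blast
  ultimately have "card (U \<inter> sym_diff S S') \<le> 1"
    using d_sj_eq_card_sym_diff[of S S'] by simp
  moreover have "1 \<le> p / (1 - p)"
    using assms by (simp add: field_simps)
  ultimately have loss_le: "(p / (1 - p)) ^ card (U \<inter> sym_diff S S') \<le> p / (1 - p)"
    using power_increasing[of _ 1 "p / (1 - p)"] by simp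
  have "measure_pmf.prob (warner_B1 U p B1 S) Out
          \<le> (p / (1 - p)) ^ card (U \<inter> sym_diff S S') * measure_pmf.prob (warner_B1 U p B1 S') Out"
    by (rule warner_B1_group_privacy) (use assms in auto)
  also have "\<dots> \<le> p / (1 - p) * measure_pmf.prob (warner_B1 U p B1 S') Out"
    by (rule mult_right_mono[OF loss_le measure_nonneg])
  finally show "measure_pmf.prob (warner_B1 U p B1 S) Out
                  \<le> exp (ln (p / (1 - p))) * measure_pmf.prob (warner_B1 U p B1 S') Out + 0"
    using assms by simp
qed

end
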